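(* Fix $\Theta\in\Omega$ and let $\mu$ be as in the setup. Almost surely there exists $L_0\in\mathbb R$ such that for every $l\ge L_0$ and every $0\le\delta\le l$, $$\mu[l,l+\delta]\le 2\delta\,\frac{\mathbb E[\mu[0,l]]}{l}+\frac{13\log l}{l}.$$
   Context: Let $\Omega$ be the set of sequences $\Theta=(\theta_i)_{i\ge 0}$ of nonnegative reals with $\sum_{i\ge0}\theta_i^2=1$, $\theta_1\ge\theta_2\ge\cdots$, and either $\theta_0\ne0$ or $\sum_{i\ge1}\theta_i=\infty$. For $\Theta\in\Omega$, let $(X_i)_{i\ge1}$ be independent exponential random variables with respective rates $\theta_i$ (a rate-$0$ variable equals $+\infty$), and let $\mu:=\theta_0^2\,dx+\sum_{i\ge1}\theta_i\delta_{X_i}$, a random measure on $\mathbb R^+$. *)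

theory Defs
  imports "HOL-Probability.Probability"
begin

text \<open>The parameter set Omega: theta 0 is the Lebesgue weight, theta i (i >= 1) the atom weights.\<close>
definition in_Omega :: "(nat \<Rightarrow> real) \<Rightarrow> bool" where
  "in_Omega \<theta> \<longleftrightarrow>
     (\<forall>i. 0 \<le> \<theta> i) \<and>
     (\<lambda>i. (\<theta> i)\<^sup>2) sums 1 \<and>
     (\<forall>i\<ge>1. \<theta> (Suc i) \<le> \<theta> i) \<and>
     (\<theta> 0 \<noteq> 0 \<or> \<not> summable (\<lambda>i. \<theta> (Suc i)))"

definition mu_Icc :: "(nat \<Rightarrow> real) \<Rightarrow> (nat \<Rightarrow> 'a \<Rightarrow> real) \<Rightarrow> 'a \<Rightarrow> real \<Rightarrow> real \<Rightarrow> ennreal" where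
  "mu_Icc \<theta> X \<omega> a b =
     ennreal ((\<theta> 0)\<^sup>2 * (b - a)) +
     (\<Sum>i. ennreal (\<theta> (Suc i)) * indicator {a..b} (X (Suc i) \<omega>))"

end

theory Submission
  imports Defs
begin

text \<open>The expected mass of \<open>[0, l]\<close> is \<open>\<theta>\<^sub>0\<^sup>2 l + G l\<close> with
  \<open>G x = \<Sum>\<^sub>i \<theta>\<^sub>i (1 - exp (- \<theta>\<^sub>i x))\<close>, and \<open>G\<close> is increasing with \<open>G x \<le> x\<close>.
  For a fixed interval \<open>[a, a + h]\<close>, a Chernoff bound with parameter \<open>a\<close> over the independent
  atoms gives \<open>P(atomic mass > h G(a) / a + y) \<le> exp (- a y)\<close>; with \<open>y = 5 ln a / a\<close> this is
  \<open>a\<^sup>-\<^sup>5\<close>. For each \<open>n\<close> take the \<open>3 n\<^sup>3\<close> grid intervals with left endpoints \<open>n + j / n\<close>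
  (\<open>j < n\<close>) and lengths \<open>k / n\<close> (\<open>k < 3 n\<^sup>2\<close>): the probability that one of them is
  exceptional is at most \<open>3 / n\<^sup>2\<close>, so by Borel--Cantelli almost surely none is, for large
  \<open>n\<close>. Every \<open>[l, l + \<delta>]\<close> with \<open>n \<le> l < n + 1\<close> lies in a grid interval of length at
  most \<open>\<delta> + 2 / n\<close> whose left endpoint is within \<open>1 / n\<close> of \<open>l\<close>, and the rounding errors
  are absorbed into \<open>13 ln l / l\<close>.\<close>

lemma emeasure_exponential_Icc:
  assumes D: "distributed M lborel Y (exponential_density t)"
    and t: "0 < t" and a: "0 \<le> a" and ab: "a \<le> b"
  shows "emeasure M (Y -` {a..b} \<inter> space M) = ennreal (exp (- t * a) - exp (- t * b))"
proof -
  have "emeasure M (Y -` {a..b} \<inter> space M) =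
     (\<integral>\<^sup>+x. ennreal (exponential_density t x) * indicator {a..b} x \<partial>lborel)"
    by (rule distributed_emeasure[OF D]) simp
  also have "\<dots> = (\<integral>\<^sup>+x. ennreal (t * exp (- x * t)) * indicator {a..b} x \<partial>lborel)"
    by (rule nn_integral_cong) (use a in \<open>auto simp: exponential_density_def split: split_indicator\<close>)
  also have "\<dots> = ennreal ((\<lambda>x. - exp (- x * t)) b - (\<lambda>x. - exp (- x * t)) a)"
  proof (rule nn_integral_FTC_Icc)
    show "(\<lambda>x. t * exp (- x * t)) \<in> borel_measurable borel" by measurable
    fix x assume "x \<in> {a..b}"
    show "((\<lambda>x. - exp (- x * t)) has_real_derivative t * exp (- x * t)) (at x)"
      by (auto intro!: derivative_eq_intros)
    show "0 \<le> t * exp (- x * t)" using t by simp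
  qed fact
  finally show ?thesis by (simp add: mult.commute)
qed

lemma emeasure_less_le_exp_nn_integral:
  fixes f :: "'a \<Rightarrow> real"
  assumes [measurable]: "f \<in> borel_measurable M" and s: "0 \<le> s"
  shows "emeasure M {x\<in>space M. y < f x}
           \<le> ennreal (exp (- s * y)) * (\<integral>\<^sup>+x. ennreal (exp (s * f x)) \<partial>M)"
proof -
  have "emeasure M {x\<in>space M. y < f x} = (\<integral>\<^sup>+x. indicator {x\<in>space M. y < f x} x \<partial>M)"
    by simp
  also have "\<dots> \<le> (\<integral>\<^sup>+x. ennreal (exp (- s * y)) * ennreal (exp (s * f x)) \<partial>M)"
  proof (rule nn_integral_mono)
    fix x
    have "y < f x \<Longrightarrow> 1 \<le> exp (- s * y) * exp (s * f x)"
      using s by (simp add: mult_left_mono flip: exp_add)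
    then show "indicator {x\<in>space M. y < f x} x \<le> ennreal (exp (- s * y)) * ennreal (exp (s * f x))"
      by (simp add: indicator_def ennreal_mult'[symmetric])
  qed
  also have "\<dots> = ennreal (exp (- s * y)) * (\<integral>\<^sup>+x. ennreal (exp (s * f x)) \<partial>M)"
    by (rule nn_integral_cmult) measurable
  finally show ?thesis .
qed

text \<open>The Chernoff parameter is tied to the left endpoint: for \<open>s = a\<close> the factor
  \<open>(exp (s t) - 1) exp (- t a)\<close> collapses to \<open>1 - exp (- t a)\<close>.\<close>

lemma (in prob_space) nn_integral_exp_indicator_exponential_le:
  assumes D: "distributed M lborel Y (exponential_density t)"
    and t: "0 < t" and a: "0 \<le> a" and ab: "a \<le> b"
  shows "(\<integral>\<^sup>+\<omega>. ennreal (exp (a * (t * indicator {a..b} (Y \<omega>)))) \<partial>M)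
     \<le> ennreal (exp ((b - a) * (t * (1 - exp (- t * a)))))"
proof -
  have [measurable]: "Y \<in> borel_measurable M"
    using distributed_measurable[OF D] by simp
  define c where "c = exp (a * t) - 1"
  have c0: "0 \<le> c" using a t by (simp add: c_def)
  have p0: "0 \<le> exp (- t * a) - exp (- t * b)" using ab t by simp
  have "(\<integral>\<^sup>+\<omega>. ennreal (exp (a * (t * indicator {a..b} (Y \<omega>)))) \<partial>M)
      = (\<integral>\<^sup>+\<omega>. 1 + ennreal c * indicator (Y -` {a..b} \<inter> space M) \<omega> \<partial>M)"
  proof (rule nn_integral_cong)
    have "exp (a * t) = 1 + c" by (simp add: c_def)
    then have "ennreal (exp (a * t)) = 1 + ennreal c"
      using c0 by (simp add: ennreal_plus)
    then show "ennreal (exp (a * (t * indicator {a..b} (Y \<omega>))))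
        = 1 + ennreal c * indicator (Y -` {a..b} \<inter> space M) \<omega>" if "\<omega> \<in> space M" for \<omega>
      using that by (auto split: split_indicator)
  qed
  also have "\<dots> = 1 + ennreal c * emeasure M (Y -` {a..b} \<inter> space M)"
    by (subst nn_integral_add) (auto simp: nn_integral_cmult_indicator emeasure_space_1)
  also have "\<dots> = ennreal (1 + c * (exp (- t * a) - exp (- t * b)))"
    using emeasure_exponential_Icc[OF D t a ab] c0 p0
    by (simp add: ennreal_plus ennreal_mult[symmetric])
  also have "\<dots> \<le> ennreal (exp ((b - a) * (t * (1 - exp (- t * a)))))"
  proof (rule ennreal_leI)
    have collapse: "c * (exp (- t * a) - exp (- t * b)) = (1 - exp (- t * a)) * (1 - exp (- t * (b - a)))"
      by (simp add: c_def algebra_simps flip: exp_add)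
    have "1 - exp (- t * (b - a)) \<le> t * (b - a)"
      using exp_ge_add_one_self[of "- t * (b - a)"] by simp
    moreover have "0 \<le> 1 - exp (- t * a)" using t a by simp
    ultimately have "(1 - exp (- t * a)) * (1 - exp (- t * (b - a))) \<le> (1 - exp (- t * a)) * (t * (b - a))"
      by (rule mult_left_mono)
    then have "c * (exp (- t * a) - exp (- t * b)) \<le> (b - a) * (t * (1 - exp (- t * a)))"
      unfolding collapse by (simp add: algebra_simps)
    then show "1 + c * (exp (- t * a) - exp (- t * b)) \<le> exp ((b - a) * (t * (1 - exp (- t * a))))"
      by (smt (verit) exp_ge_add_one_self exp_le_cancel_iff)
  qed
  finally show ?thesis .
qed

definition atom_mean :: "(nat \<Rightarrow> real) \<Rightarrow> real \<Rightarrow> real" where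
  "atom_mean \<theta> x = (\<Sum>i. \<theta> (Suc i) * (1 - exp (- \<theta> (Suc i) * x)))"

definition atom_mass :: "(nat \<Rightarrow> real) \<Rightarrow> (nat \<Rightarrow> 'a \<Rightarrow> real) \<Rightarrow> real \<Rightarrow> real \<Rightarrow> 'a \<Rightarrow> ennreal" where
  "atom_mass \<theta> X a b \<omega> = (\<Sum>i. ennreal (\<theta> (Suc i)) * indicator {a..b} (X (Suc i) \<omega>))"

lemma in_Omega_nonneg: "in_Omega \<theta> \<Longrightarrow> 0 \<le> \<theta> i"
  by (simp add: in_Omega_def)

lemma in_Omega_atom_squares:
  assumes "in_Omega \<theta>"
  shows "summable (\<lambda>i. (\<theta> (Suc i))\<^sup>2)" and "(\<Sum>i. (\<theta> (Suc i))\<^sup>2) \<le> 1"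
proof -
  have s: "(\<lambda>i. (\<theta> i)\<^sup>2) sums 1" using assms by (simp add: in_Omega_def)
  then have sm: "summable (\<lambda>i. (\<theta> i)\<^sup>2)" by (rule sums_summable)
  then show "summable (\<lambda>i. (\<theta> (Suc i))\<^sup>2)" by (subst summable_Suc_iff)
  have "1 = (\<theta> 0)\<^sup>2 + (\<Sum>i. (\<theta> (Suc i))\<^sup>2)"
    using suminf_split_head[OF sm] sums_unique[OF s] by simp
  then show "(\<Sum>i. (\<theta> (Suc i))\<^sup>2) \<le> 1" using zero_le_power2[of "\<theta> 0"] by linarith
qed

lemma atom_mean_term_bounds:
  fixes t x :: real
  assumes "0 \<le> t" "0 \<le> x"
  shows "0 \<le> t * (1 - exp (- t * x))" "t * (1 - exp (- t * x)) \<le> t\<^sup>2 * x"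
proof -
  have "exp (- t * x) \<le> 1" using assms by simp
  then show "0 \<le> t * (1 - exp (- t * x))" using assms by simp
  have "1 - exp (- t * x) \<le> t * x" using exp_ge_add_one_self[of "- t * x"] by simp
  then have "t * (1 - exp (- t * x)) \<le> t * (t * x)" using assms by (intro mult_left_mono)
  then show "t * (1 - exp (- t * x)) \<le> t\<^sup>2 * x" by (simp add: power2_eq_square)
qed

lemma atom_mean_summable:
  assumes "in_Omega \<theta>" "0 \<le> x"
  shows "summable (\<lambda>i. \<theta> (Suc i) * (1 - exp (- \<theta> (Suc i) * x)))"
proof (rule summable_comparison_test')
  show "summable (\<lambda>i. (\<theta> (Suc i))\<^sup>2 * x)"
    using in_Omega_atom_squares(1)[OF assms(1)] by (rule summable_mult2)
  show "norm (\<theta> (Suc i) * (1 - exp (- \<theta> (Suc i) * x))) \<le> (\<theta> (Suc i))\<^sup>2 * x" for i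
    using atom_mean_term_bounds[OF in_Omega_nonneg[OF assms(1)] assms(2)] by simp
qed

lemma atom_mean_nonneg: "in_Omega \<theta> \<Longrightarrow> 0 \<le> x \<Longrightarrow> 0 \<le> atom_mean \<theta> x"
  unfolding atom_mean_def
  by (intro suminf_nonneg atom_mean_summable atom_mean_term_bounds) (auto simp: in_Omega_nonneg)

lemma atom_mean_le:
  assumes "in_Omega \<theta>" "0 \<le> x"
  shows "atom_mean \<theta> x \<le> x"
proof -
  have "atom_mean \<theta> x \<le> (\<Sum>i. (\<theta> (Suc i))\<^sup>2 * x)"
    unfolding atom_mean_def using assms
    by (intro suminf_le atom_mean_summable atom_mean_term_bounds summable_mult2
        in_Omega_atom_squares) (auto simp: in_Omega_nonneg)
  also have "\<dots> = (\<Sum>i. (\<theta> (Suc i))\<^sup>2) * x"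
    by (rule suminf_mult2[symmetric]) (rule in_Omega_atom_squares[OF assms(1)])
  also have "\<dots> \<le> x"
    using in_Omega_atom_squares(2)[OF assms(1)] assms(2) by (simp add: mult.commute mult_left_le)
  finally show ?thesis .
qed

lemma atom_mean_mono:
  assumes "in_Omega \<theta>" "0 \<le> x" "x \<le> y"
  shows "atom_mean \<theta> x \<le> atom_mean \<theta> y"
  unfolding atom_mean_def
proof (rule suminf_le)
  fix i
  have t: "0 \<le> \<theta> (Suc i)" using assms(1) by (rule in_Omega_nonneg)
  then have "exp (- \<theta> (Suc i) * y) \<le> exp (- \<theta> (Suc i) * x)"
    using assms by (simp add: mult_left_mono)
  then show "\<theta> (Suc i) * (1 - exp (- \<theta> (Suc i) * x)) \<le> \<theta> (Suc i) * (1 - exp (- \<theta> (Suc i) * y))"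
    using t by (intro mult_left_mono) auto
qed (use assms atom_mean_summable in auto)

lemma atom_mass_mono:
  assumes "a \<le> c" "d \<le> b"
  shows "atom_mass \<theta> X c d \<omega> \<le> atom_mass \<theta> X a b \<omega>"
  unfolding atom_mass_def
proof (rule suminf_le)
  have "indicator {c..d} (X (Suc i) \<omega>) \<le> (indicator {a..b} (X (Suc i) \<omega>) :: ennreal)" for i
    using assms by (auto split: split_indicator)
  then show "ennreal (\<theta> (Suc i)) * indicator {c..d} (X (Suc i) \<omega>)
      \<le> ennreal (\<theta> (Suc i)) * indicator {a..b} (X (Suc i) \<omega>)" for i
    by (rule mult_left_mono) simp
qed auto

lemma mu_Icc_eq_atom_mass:
  "mu_Icc \<theta> X \<omega> a b = ennreal ((\<theta> 0)\<^sup>2 * (b - a)) + atom_mass \<theta> X a b \<omega>"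
  by (simp add: mu_Icc_def atom_mass_def)

definition grid_point :: "nat \<Rightarrow> nat \<Rightarrow> real" where
  "grid_point n j = real n + real j / real n"

lemma grid_point_ge: "real n \<le> grid_point n j"
  by (simp add: grid_point_def)

lemma grid_cover:
  fixes l \<delta> :: real
  assumes n: "2 \<le> n" "real n \<le> l" "l < real n + 1" and \<delta>: "0 \<le> \<delta>" "\<delta> \<le> l"
  obtains j k where "j < n" "k < 3 * n\<^sup>2" "grid_point n j \<le> l" "l < grid_point n j + 1 / n"
    "l + \<delta> \<le> grid_point n j + real k / n" "real k / n \<le> \<delta> + 2 / n"
proof -
  have n0: "0 < real n" using n by simp
  define j where "j = nat \<lfloor>(l - n) * n\<rfloor>"
  have j: "real j \<le> (l - n) * n" "(l - n) * n < real j + 1"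
    using n n0 by (auto simp: j_def)
  have "(l - n) * n < 1 * real n" using n n0 by (intro mult_strict_right_mono) auto
  then have "j < n" using j by linarith
  define a where "a = grid_point n j"
  have "real j / n \<le> l - n" using j n0 by (simp add: divide_le_eq)
  then have al: "a \<le> l" by (simp add: a_def grid_point_def)
  have "l - n < (real j + 1) / n" using j n0 by (simp add: less_divide_eq)
  then have la: "l < a + 1 / n" by (simp add: a_def grid_point_def add_divide_distrib)
  have na: "real n \<le> a" unfolding a_def by (rule grid_point_ge)
  define k where "k = nat \<lceil>(l + \<delta> - a) * n\<rceil>"
  have k: "(l + \<delta> - a) * n \<le> real k" "real k < (l + \<delta> - a) * n + 1"
    using al \<delta> n0 by (auto simp: k_def) linarith+
  have "(l + \<delta> - a) * n \<le> (real n + 2) * n"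
    using n \<delta> na by (intro mult_right_mono) auto
  moreover have "(real n + 2) * real n + 1 \<le> 3 * real n ^ 2"
  proof -
    have "2 * real n \<le> real n * real n" using n(1) by (intro mult_right_mono) auto
    then show ?thesis using n(1) unfolding power2_eq_square distrib_right by linarith
  qed
  ultimately have "real k < 3 * real n ^ 2"
    using k(2) by linarith
  then have "k < 3 * n\<^sup>2"
    by (metis of_nat_less_iff of_nat_mult of_nat_numeral of_nat_power)
  moreover have "l + \<delta> \<le> a + real k / n"
  proof -
    have "l + \<delta> - a \<le> real k / n" using k(1) n0 by (simp add: pos_le_divide_eq)
    then show ?thesis by linarith
  qed
  moreover have "real k / n \<le> \<delta> + 2 / n"
  proof -
    have "real k / n < ((l + \<delta> - a) * n + 1) / n" using k n0 by (simp add: divide_strict_right_mono)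
    also have "\<dots> = l + \<delta> - a + 1 / n" using n0 by (simp add: field_simps)
    finally show ?thesis using la by simp
  qed
  ultimately show ?thesis using that \<open>j < n\<close> al la unfolding a_def by blast
qed

lemma interval_bound_arith:
  fixes l \<delta> t G_a G_l a :: real and n k :: nat
  assumes n2: "2 \<le> n" and na: "real n \<le> a" and al: "a \<le> l" and la: "l < a + 1 / n"
    and ln1: "l < real n + 1" and kd: "k / n \<le> \<delta> + 2 / n" and d0: "0 \<le> \<delta>"
    and Ga0: "0 \<le> G_a" and GaGl: "G_a \<le> G_l" and Gll: "G_l \<le> l" and t0: "0 \<le> t"
    and lnl: "3 \<le> ln l"
  shows "t * \<delta> + (k / n * G_a / a + 5 * ln a / a) \<le> 2 * \<delta> / l * (t * l + G_l) + 13 * ln l / l"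
proof -
  have n0: "0 < real n" using n2 by simp
  have a2: "2 \<le> a" using n2 na by simp
  have l0: "0 < l" using a2 al by simp
  have Gl0: "0 \<le> G_l" using Ga0 GaGl by simp
  have l2a: "l \<le> 2 * a"
  proof -
    have "1 / real n \<le> 1" using n2 by simp
    then show ?thesis using la a2 by linarith
  qed
  have "k / n * G_a / a \<le> (\<delta> + 2 / n) * G_l / a"
    using kd Ga0 GaGl a2 d0 n0 by (intro divide_right_mono mult_mono) auto
  also have "\<dots> = \<delta> * G_l / a + (2 / n) * G_l / a"
    using a2 n0 by (simp add: field_simps)
  also have "\<delta> * G_l / a \<le> 2 * \<delta> * G_l / l"
    using l0 l2a d0 Gl0 a2 by (simp add: field_simps mult_left_mono)
  also have "(2 / n) * G_l / a \<le> 3 * ln l / l"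
  proof -
    have "(2 / n) * G_l / a \<le> (2 / n) * l / (l / 2)"
      using Gll n0 l0 l2a a2 Gl0 by (intro divide_mono mult_left_mono) auto
    also have "\<dots> = 4 / n" using l0 by simp
    also have "\<dots> \<le> 8 / l" using ln1 n2 n0 l0 by (simp add: field_simps)
    also have "\<dots> \<le> 3 * ln l / l" using lnl l0 by (intro divide_right_mono) auto
    finally show ?thesis .
  qed
  finally have atoms: "k / n * G_a / a \<le> 2 * \<delta> * G_l / l + 3 * ln l / l"
    by simp
  have "5 * ln a / a \<le> 5 * ln l / a" using a2 al by (intro divide_right_mono) auto
  also have "\<dots> = 10 * ln l / (2 * a)" by simp
  also have "\<dots> \<le> 10 * ln l / l"
    using l2a l0 lnl a2 al by (intro divide_left_mono) auto
  finally have logs: "5 * ln a / a \<le> 10 * ln l / l" .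
  have "2 * \<delta> / l * (t * l + G_l) = 2 * (t * \<delta>) + 2 * \<delta> * G_l / l"
    and "13 * ln l / l = 3 * ln l / l + 10 * ln l / l"
    using l0 by (simp_all add: field_simps)
  then show ?thesis
    using atoms logs mult_nonneg_nonneg[OF t0 d0] by linarith
qed

text \<open>The logarithmic term is chosen so that the Chernoff bound of
  \<open>atom_mass_tail_bound\<close> at parameter \<open>a\<close> becomes \<open>a ^ -5\<close>.\<close>

definition grid_threshold :: "(nat \<Rightarrow> real) \<Rightarrow> nat \<Rightarrow> nat \<Rightarrow> nat \<Rightarrow> real" where
  "grid_threshold \<theta> n j k =
     real k / real n * atom_mean \<theta> (grid_point n j) / grid_point n j
     + 5 * ln (grid_point n j) / grid_point n j"

lemma grid_threshold_nonneg:
  assumes "in_Omega \<theta>" "1 \<le> n"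
  shows "0 \<le> grid_threshold \<theta> n j k"
proof -
  have a: "1 \<le> grid_point n j" using grid_point_ge[of n j] assms(2) by linarith
  then have "0 \<le> atom_mean \<theta> (grid_point n j)" by (intro atom_mean_nonneg assms(1)) simp
  then show ?thesis using a by (simp add: grid_threshold_def)
qed

lemma grid_threshold_le:
  assumes \<theta>: "in_Omega \<theta>" and n: "2 \<le> n" "l < real n + 1"
    and cover: "grid_point n j \<le> l" "l < grid_point n j + 1 / n" "real k / n \<le> \<delta> + 2 / n"
    and \<delta>: "0 \<le> \<delta>" and lnl: "3 \<le> ln l"
  shows "(\<theta> 0)\<^sup>2 * \<delta> + grid_threshold \<theta> n j k
           \<le> 2 * \<delta> / l * ((\<theta> 0)\<^sup>2 * l + atom_mean \<theta> l) + 13 * ln l / l"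
proof -
  define a where "a = grid_point n j"
  have na: "real n \<le> a" unfolding a_def by (rule grid_point_ge)
  then have "0 \<le> a" by simp
  then show ?thesis
    unfolding grid_threshold_def a_def[symmetric]
    using cover \<delta> lnl na
    by (intro interval_bound_arith[OF n(1) na _ _ n(2) cover(3)] atom_mean_nonneg[OF \<theta>]
        atom_mean_mono[OF \<theta>] atom_mean_le[OF \<theta>]) (auto simp: a_def)
qed

locale exponential_atoms = prob_space M for M :: "'a measure" +
  fixes \<theta> :: "nat \<Rightarrow> real" and X :: "nat \<Rightarrow> 'a \<Rightarrow> real"
  assumes in_Omega: "in_Omega \<theta>"
    and indep: "indep_vars (\<lambda>_. borel) X {1..}"
    and exponential: "\<And>i. 1 \<le> i \<Longrightarrow> 0 < \<theta> i \<Longrightarrow> distributed M lborel (X i) (exponential_density (\<theta> i))"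
begin

lemma weight_nonneg: "0 \<le> \<theta> i"
  using in_Omega by (rule in_Omega_nonneg)

lemma X_Suc_measurable [measurable]: "X (Suc i) \<in> borel_measurable M"
  using indep by (auto simp: indep_vars_def)

lemma nn_integral_exp_weighted_count_le:
  assumes J: "finite J" "J \<subseteq> {1..}" and a: "0 \<le> a" and ab: "a \<le> b"
  shows "(\<integral>\<^sup>+\<omega>. ennreal (exp (a * (\<Sum>i\<in>J. \<theta> i * indicator {a..b} (X i \<omega>)))) \<partial>M)
     \<le> ennreal (exp ((b - a) * (\<Sum>i\<in>J. \<theta> i * (1 - exp (- \<theta> i * a)))))"
proof -
  define F where "F i \<omega> = ennreal (exp (a * (\<theta> i * indicator {a..b} (X i \<omega>))))" for i \<omega>
  have "(\<integral>\<^sup>+\<omega>. ennreal (exp (a * (\<Sum>i\<in>J. \<theta> i * indicator {a..b} (X i \<omega>)))) \<partial>M)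
      = (\<integral>\<^sup>+\<omega>. (\<Prod>i\<in>J. F i \<omega>) \<partial>M)"
    by (simp add: F_def sum_distrib_left exp_sum[OF J(1)] prod_ennreal)
  also have "\<dots> = (\<Prod>i\<in>J. \<integral>\<^sup>+\<omega>. F i \<omega> \<partial>M)"
  proof (rule indep_vars_nn_integral[OF J(1)])
    show "indep_vars (\<lambda>_. borel) F J"
      unfolding F_def
      by (rule indep_vars_compose2[where X=X and M'="\<lambda>_. borel"])
         (use indep_vars_subset[OF indep J(2)] in auto)
  qed simp
  also have "\<dots> \<le> (\<Prod>i\<in>J. ennreal (exp ((b - a) * (\<theta> i * (1 - exp (- \<theta> i * a))))))"
  proof (rule prod_mono_ennreal)
    fix i assume "i \<in> J"
    show "(\<integral>\<^sup>+\<omega>. F i \<omega> \<partial>M) \<le> ennreal (exp ((b - a) * (\<theta> i * (1 - exp (- \<theta> i * a)))))"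
    proof (cases "\<theta> i = 0")
      case True
      then show ?thesis by (simp add: F_def emeasure_space_1)
    next
      case False
      then have "0 < \<theta> i" using weight_nonneg[of i] by simp
      moreover have "1 \<le> i" using \<open>i \<in> J\<close> J(2) by auto
      ultimately show ?thesis unfolding F_def
        by (intro nn_integral_exp_indicator_exponential_le exponential a ab)
    qed
  qed
  also have "\<dots> = ennreal (exp ((b - a) * (\<Sum>i\<in>J. \<theta> i * (1 - exp (- \<theta> i * a)))))"
    by (simp add: prod_ennreal exp_sum[OF J(1), symmetric] sum_distrib_left)
  finally show ?thesis .
qed

lemma emeasure_partial_atom_mass_gt_le:
  assumes a: "0 \<le> a" and ab: "a \<le> b"
  shows "emeasure M {\<omega>\<in>space M. y < (\<Sum>i<N. \<theta> (Suc i) * indicator {a..b} (X (Suc i) \<omega>))}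
          \<le> ennreal (exp ((b - a) * atom_mean \<theta> a - a * y))"
proof -
  define J where "J = Suc ` {..<N}"
  have J: "finite J" "J \<subseteq> {1..}" by (auto simp: J_def)
  have reindex: "(\<Sum>i\<in>J. f i) = (\<Sum>i<N. f (Suc i))" for f :: "nat \<Rightarrow> real"
    unfolding J_def by (subst sum.reindex) auto
  have "(\<Sum>i\<in>J. \<theta> i * (1 - exp (- \<theta> i * a))) \<le> atom_mean \<theta> a"
    unfolding atom_mean_def reindex using in_Omega a
    by (intro sum_le_suminf atom_mean_summable ballI atom_mean_term_bounds weight_nonneg) auto
  then have exponent: "(b - a) * (\<Sum>i\<in>J. \<theta> i * (1 - exp (- \<theta> i * a))) - a * y
      \<le> (b - a) * atom_mean \<theta> a - a * y"
    using ab by (simp add: mult_left_mono)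
  have "emeasure M {\<omega>\<in>space M. y < (\<Sum>i<N. \<theta> (Suc i) * indicator {a..b} (X (Suc i) \<omega>))}
      \<le> ennreal (exp (- a * y))
          * (\<integral>\<^sup>+\<omega>. ennreal (exp (a * (\<Sum>i<N. \<theta> (Suc i) * indicator {a..b} (X (Suc i) \<omega>)))) \<partial>M)"
    using a by (intro emeasure_less_le_exp_nn_integral) measurable
  also have "\<dots> = ennreal (exp (- a * y))
          * (\<integral>\<^sup>+\<omega>. ennreal (exp (a * (\<Sum>i\<in>J. \<theta> i * indicator {a..b} (X i \<omega>)))) \<partial>M)"
    by (simp only: reindex)
  also have "\<dots> \<le> ennreal (exp (- a * y)) * ennreal (exp ((b - a) * (\<Sum>i\<in>J. \<theta> i * (1 - exp (- \<theta> i * a)))))"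
    by (intro mult_left_mono nn_integral_exp_weighted_count_le J a ab) simp
  also have "\<dots> \<le> ennreal (exp ((b - a) * atom_mean \<theta> a - a * y))"
    using exponent by (simp add: ennreal_mult[symmetric] flip: exp_add)
  finally show ?thesis .
qed

lemma atom_mass_tail_bound:
  assumes a: "0 \<le> a" and ab: "a \<le> b" and y: "0 \<le> y"
  shows "{\<omega>\<in>space M. ennreal y < atom_mass \<theta> X a b \<omega>} \<in> sets M"
    and "emeasure M {\<omega>\<in>space M. ennreal y < atom_mass \<theta> X a b \<omega>}
           \<le> ennreal (exp ((b - a) * atom_mean \<theta> a - a * y))"
proof -
  define S where "S N \<omega> = (\<Sum>i<N. \<theta> (Suc i) * indicator {a..b} (X (Suc i) \<omega>))" for N \<omega>
  define A where "A N = {\<omega>\<in>space M. y < S N \<omega>}" for N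
  have A_sets: "A N \<in> sets M" for N unfolding A_def S_def by measurable
  have "atom_mass \<theta> X a b \<omega> = (SUP N. ennreal (S N \<omega>))" for \<omega>
    unfolding atom_mass_def S_def suminf_eq_SUP
    by (simp add: weight_nonneg ennreal_mult' indicator_def sum_nonneg)
  then have union: "{\<omega>\<in>space M. ennreal y < atom_mass \<theta> X a b \<omega>} = (\<Union>N. A N)"
    unfolding A_def by (auto simp: less_SUP_iff ennreal_less_iff y)
  show "{\<omega>\<in>space M. ennreal y < atom_mass \<theta> X a b \<omega>} \<in> sets M"
    unfolding union using A_sets by auto
  have "incseq A"
    unfolding incseq_Suc_iff A_def S_def
    by (auto simp: weight_nonneg intro: less_le_trans)
  then have "emeasure M (\<Union>N. A N) = (SUP N. emeasure M (A N))"
    using A_sets by (intro SUP_emeasure_incseq[symmetric]) auto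
  also have "\<dots> \<le> ennreal (exp ((b - a) * atom_mean \<theta> a - a * y))"
    unfolding A_def S_def by (intro SUP_least emeasure_partial_atom_mass_gt_le a ab)
  finally show "emeasure M {\<omega>\<in>space M. ennreal y < atom_mass \<theta> X a b \<omega>}
      \<le> ennreal (exp ((b - a) * atom_mean \<theta> a - a * y))"
    unfolding union .
qed

lemma nn_integral_mu_Icc_0:
  assumes l: "0 \<le> l"
  shows "(\<integral>\<^sup>+\<omega>. mu_Icc \<theta> X \<omega> 0 l \<partial>M) = ennreal ((\<theta> 0)\<^sup>2 * l + atom_mean \<theta> l)"
proof -
  have atom: "(\<integral>\<^sup>+\<omega>. ennreal (\<theta> (Suc i)) * indicator {0..l} (X (Suc i) \<omega>) \<partial>M)
      = ennreal (\<theta> (Suc i) * (1 - exp (- \<theta> (Suc i) * l)))" for i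
  proof -
    have "(\<integral>\<^sup>+\<omega>. ennreal (\<theta> (Suc i)) * indicator {0..l} (X (Suc i) \<omega>) \<partial>M)
        = ennreal (\<theta> (Suc i)) * emeasure M (X (Suc i) -` {0..l} \<inter> space M)"
      by (subst nn_integral_cmult_indicator[symmetric]) (auto intro!: nn_integral_cong split: split_indicator)
    also have "\<dots> = ennreal (\<theta> (Suc i) * (1 - exp (- \<theta> (Suc i) * l)))"
    proof (cases "\<theta> (Suc i) = 0")
      case False
      then have t: "0 < \<theta> (Suc i)" using weight_nonneg[of "Suc i"] by simp
      then have "exp (- \<theta> (Suc i) * l) \<le> 1" using l by simp
      then show ?thesis
        using emeasure_exponential_Icc[OF exponential[OF _ t] t order_refl l] t
        by (simp add: ennreal_mult)
    qed simp
    finally show ?thesis .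
  qed
  have "(\<integral>\<^sup>+\<omega>. mu_Icc \<theta> X \<omega> 0 l \<partial>M) = ennreal ((\<theta> 0)\<^sup>2 * l) + (\<integral>\<^sup>+\<omega>. atom_mass \<theta> X 0 l \<omega> \<partial>M)"
    unfolding mu_Icc_eq_atom_mass atom_mass_def
    by (subst nn_integral_add) (auto simp: emeasure_space_1)
  also have "(\<integral>\<^sup>+\<omega>. atom_mass \<theta> X 0 l \<omega> \<partial>M) = ennreal (atom_mean \<theta> l)"
  proof -
    have "(\<integral>\<^sup>+\<omega>. atom_mass \<theta> X 0 l \<omega> \<partial>M)
        = (\<Sum>i. ennreal (\<theta> (Suc i) * (1 - exp (- \<theta> (Suc i) * l))))"
      unfolding atom_mass_def by (subst nn_integral_suminf) (simp_all add: atom)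
    also have "\<dots> = ennreal (atom_mean \<theta> l)"
      unfolding atom_mean_def using weight_nonneg l
      by (intro suminf_ennreal2 atom_mean_term_bounds atom_mean_summable[OF in_Omega l])
    finally show ?thesis .
  qed
  finally show ?thesis
    using atom_mean_nonneg[OF in_Omega l] l by (simp add: ennreal_plus)
qed

definition grid_event :: "nat \<Rightarrow> nat \<Rightarrow> nat \<Rightarrow> 'a set" where
  "grid_event n j k = {\<omega>\<in>space M. ennreal (grid_threshold \<theta> n j k)
     < atom_mass \<theta> X (grid_point n j) (grid_point n j + real k / real n) \<omega>}"

definition grid_bad :: "nat \<Rightarrow> 'a set" where
  "grid_bad n = (\<Union>(j, k)\<in>{..<n} \<times> {..<3 * n\<^sup>2}. grid_event n j k)"

lemma grid_event_sets_emeasure: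
  assumes n: "1 \<le> n"
  shows "grid_event n j k \<in> sets M" and "emeasure M (grid_event n j k) \<le> ennreal (1 / real n ^ 5)"
proof -
  let ?a = "grid_point n j"
  have a: "real n \<le> ?a" "1 \<le> ?a" using grid_point_ge[of n j] n by linarith+
  have y: "0 \<le> grid_threshold \<theta> n j k" using in_Omega n by (rule grid_threshold_nonneg)
  show "grid_event n j k \<in> sets M"
    unfolding grid_event_def using a y by (intro atom_mass_tail_bound) auto
  have "emeasure M (grid_event n j k)
      \<le> ennreal (exp ((?a + real k / real n - ?a) * atom_mean \<theta> ?a - ?a * grid_threshold \<theta> n j k))"
    unfolding grid_event_def using a y by (intro atom_mass_tail_bound) auto
  also have "(?a + real k / real n - ?a) * atom_mean \<theta> ?a - ?a * grid_threshold \<theta> n j k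
      = - (real 5 * ln ?a)"
    using a by (simp add: grid_threshold_def field_simps)
  also have "exp (- (real 5 * ln ?a)) = inverse (?a ^ 5)"
  proof -
    have "exp (real 5 * ln ?a) = exp (ln ?a) ^ 5" by (rule exp_of_nat_mult)
    then show ?thesis using a by (simp add: exp_minus)
  qed
  also have "inverse (?a ^ 5) \<le> 1 / real n ^ 5"
    using a n by (simp add: inverse_eq_divide divide_left_mono power_mono)
  finally show "emeasure M (grid_event n j k) \<le> ennreal (1 / real n ^ 5)"
    by (simp add: ennreal_leI order_trans)
qed

lemma grid_bad_sets: "grid_bad n \<in> sets M"
proof (cases "n = 0")
  case False
  then show ?thesis unfolding grid_bad_def using grid_event_sets_emeasure(1) by (intro sets.finite_UN) auto
qed (simp add: grid_bad_def)

lemma measure_grid_bad: "measure M (grid_bad n) \<le> 3 / real n ^ 2"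
proof (cases "n = 0")
  case False
  then have n: "1 \<le> n" by simp
  have "emeasure M (grid_bad n) \<le> (\<Sum>p\<in>{..<n} \<times> {..<3 * n\<^sup>2}. emeasure M (case_prod (grid_event n) p))"
    unfolding grid_bad_def using grid_event_sets_emeasure(1)[OF n]
    by (intro emeasure_subadditive_finite) auto
  also have "\<dots> \<le> (\<Sum>(j, k)\<in>{..<n} \<times> {..<3 * n\<^sup>2}. ennreal (1 / real n ^ 5))"
    using grid_event_sets_emeasure(2)[OF n] by (intro sum_mono) auto
  also have "\<dots> = ennreal (real (n * (3 * n\<^sup>2)) * (1 / real n ^ 5))"
    by (simp add: card_cartesian_product ennreal_of_nat_eq_real_of_nat flip: ennreal_mult)
  also have "real (n * (3 * n\<^sup>2)) * (1 / real n ^ 5) = 3 / real n ^ 2"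
    using n by (simp add: field_simps power_def)
  finally show ?thesis by (simp add: emeasure_eq_measure)
qed (simp add: grid_bad_def)

lemma AE_eventually_not_grid_bad:
  "AE \<omega> in M. eventually (\<lambda>n. \<omega> \<in> space M - grid_bad n) sequentially"
proof (rule borel_cantelli_AE1)
  show "summable (\<lambda>n. measure M (grid_bad n))"
  proof (rule summable_comparison_test')
    show "summable (\<lambda>n. 3 * inverse (real n ^ 2))"
      by (intro summable_mult inverse_power_summable) simp
    show "norm (measure M (grid_bad n)) \<le> 3 * inverse (real n ^ 2)" for n
      using measure_grid_bad[of n] by (simp add: divide_inverse)
  qed
qed (simp_all add: grid_bad_sets less_top[symmetric])

lemma mu_Icc_le_of_not_grid_bad:
  assumes good: "\<And>n. N0 \<le> n \<Longrightarrow> \<omega> \<in> space M - grid_bad n"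
    and l: "max (real N0 + 1) (exp 3) \<le> l" and \<delta>: "0 \<le> \<delta>" "\<delta> \<le> l"
  shows "mu_Icc \<theta> X \<omega> l (l + \<delta>)
           \<le> ennreal (2 * \<delta> / l) * (\<integral>\<^sup>+\<omega>'. mu_Icc \<theta> X \<omega>' 0 l \<partial>M) + ennreal (13 * ln l / l)"
proof -
  have "4 \<le> exp (3::real)" using exp_ge_add_one_self[of 3] by simp
  then have l4: "4 \<le> l" using l by linarith
  have lnl: "3 \<le> ln l" using l by (subst ln_ge_iff) auto
  define n where "n = nat \<lfloor>l\<rfloor>"
  have n: "2 \<le> n" "real n \<le> l" "l < real n + 1" "N0 \<le> n"
    using l4 l by (auto simp: n_def) linarith+
  obtain j k where jk: "j < n" "k < 3 * n\<^sup>2"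
    and cover: "grid_point n j \<le> l" "l < grid_point n j + 1 / n"
      "l + \<delta> \<le> grid_point n j + real k / n" "real k / n \<le> \<delta> + 2 / n"
    using grid_cover[OF n(1-3) \<delta>] by blast
  define a where "a = grid_point n j"
  have "\<omega> \<notin> grid_event n j k"
    using good[OF n(4)] jk unfolding grid_bad_def by auto
  then have "atom_mass \<theta> X a (a + real k / n) \<omega> \<le> ennreal (grid_threshold \<theta> n j k)"
    using good[OF n(4)] by (auto simp: grid_event_def a_def not_less)
  then have "mu_Icc \<theta> X \<omega> l (l + \<delta>) \<le> ennreal ((\<theta> 0)\<^sup>2 * \<delta>) + ennreal (grid_threshold \<theta> n j k)"
    unfolding mu_Icc_eq_atom_mass using cover(1,3)
    by (auto simp: a_def intro: add_left_mono order_trans[OF atom_mass_mono])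
  also have "\<dots> = ennreal ((\<theta> 0)\<^sup>2 * \<delta> + grid_threshold \<theta> n j k)"
    using grid_threshold_nonneg[OF in_Omega, of n j k] n(1) \<delta> by (simp add: ennreal_plus)
  also have "\<dots> \<le> ennreal (2 * \<delta> / l * ((\<theta> 0)\<^sup>2 * l + atom_mean \<theta> l) + 13 * ln l / l)"
    using grid_threshold_le[OF in_Omega n(1,3) cover(1,2,4) \<delta>(1) lnl] by (rule ennreal_leI)
  also have "\<dots> = ennreal (2 * \<delta> / l) * ennreal ((\<theta> 0)\<^sup>2 * l + atom_mean \<theta> l) + ennreal (13 * ln l / l)"
  proof -
    have q: "0 \<le> 2 * \<delta> / l" and h: "0 \<le> 13 * ln l / l" using l4 \<delta> lnl by simp_all
    have g: "0 \<le> (\<theta> 0)\<^sup>2 * l + atom_mean \<theta> l"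
      using l4 atom_mean_nonneg[OF in_Omega, of l] by simp
    show ?thesis by (simp only: ennreal_plus[OF mult_nonneg_nonneg[OF q g] h] ennreal_mult[OF q g])
  qed
  also have "ennreal ((\<theta> 0)\<^sup>2 * l + atom_mean \<theta> l) = (\<integral>\<^sup>+\<omega>'. mu_Icc \<theta> X \<omega>' 0 l \<partial>M)"
    using l4 by (simp add: nn_integral_mu_Icc_0)
  finally show ?thesis .
qed

end

theorem mainTheorem9:
  fixes M :: "'a measure" and \<theta> :: "nat \<Rightarrow> real" and X :: "nat \<Rightarrow> 'a \<Rightarrow> real"
  assumes "prob_space M"
    and "in_Omega \<theta>"
    and "prob_space.indep_vars M (\<lambda>_. borel) X {1..}"
    and "\<And>i. 1 \<le> i \<Longrightarrow> 0 < \<theta> i \<Longrightarrow> distributed M lborel (X i) (exponential_density (\<theta> i))"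
  shows "AE \<omega> in M. \<exists>L0::real. \<forall>l \<delta>. L0 \<le> l \<longrightarrow> 0 \<le> \<delta> \<longrightarrow> \<delta> \<le> l \<longrightarrow>
            mu_Icc \<theta> X \<omega> l (l + \<delta>)
              \<le> ennreal (2 * \<delta> / l) * (\<integral>\<^sup>+ \<omega>'. mu_Icc \<theta> X \<omega>' 0 l \<partial>M)
                 + ennreal (13 * ln l / l)"
proof -
  interpret exponential_atoms M \<theta> X
    using assms by (simp add: exponential_atoms_def exponential_atoms_axioms_def)
  show ?thesis
    using AE_eventually_not_grid_bad
  proof (rule eventually_mono)
    fix \<omega> assume "eventually (\<lambda>n. \<omega> \<in> space M - grid_bad n) sequentially"
    then obtain N0 where "\<And>n. N0 \<le> n \<Longrightarrow> \<omega> \<in> space M - grid_bad n"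
      by (auto simp: eventually_sequentially)
    then show "\<exists>L0::real. \<forall>l \<delta>. L0 \<le> l \<longrightarrow> 0 \<le> \<delta> \<longrightarrow> \<delta> \<le> l \<longrightarrow>
            mu_Icc \<theta> X \<omega> l (l + \<delta>)
              \<le> ennreal (2 * \<delta> / l) * (\<integral>\<^sup>+ \<omega>'. mu_Icc \<theta> X \<omega>' 0 l \<partial>M)
                 + ennreal (13 * ln l / l)"
      by (blast intro: mu_Icc_le_of_not_grid_bad)
  qed
qed

end
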